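(* (i) For every $L>0$, the map $\Delta\mapsto \mathrm P_\Delta(|\hat\tau_{\rm PT}-\tau|\le L(1+\gamma)^{-1/2}\sigma_0)$ is symmetric about $\Delta=0$. (ii) For every $t\in\mathbb R$ and $L\ge0$, with $c=c_{\alpha/2}$, \begin{align*} G_{\rm PT}(t,L):={}&\mathrm P_{\Delta/\sigma_0=t}\big(|\hat\tau_{\rm PT}-\tau|\le L(1+\gamma)^{-1/2}\sigma_0\big)\\ ={}&\Big[\Phi\big(c-\sqrt{\tfrac{\gamma}{1+\gamma}}t\big)-\Phi\big(-c-\sqrt{\tfrac{\gamma}{1+\gamma}}t\big)\Big]\Big[\Phi\big(L-\tfrac{\gamma}{\sqrt{1+\gamma}}t\big)-\Phi\big(-L-\tfrac{\gamma}{\sqrt{1+\gamma}}t\big)\Big]\\ &+\int_{-\infty}^{-c-\sqrt{\frac{\gamma}{1+\gamma}}t}\big[\Phi(L+\sqrt\gamma u)-\Phi(-L+\sqrt\gamma u)\big]\phi(u)\,du\\ &+\int_{c-\sqrt{\frac{\gamma}{1+\gamma}}t}^{\infty}\big[\Phi(L+\sqrt\gamma u)-\Phi(-L+\sqrt\gamma u)\big]\phi(u)\,du. \end{align*} (iii) Fix $b\ge0$ and $\zeta\in(0,1)$, and let \[ \hat L_{\rm PT}=\inf\Big\{L\ge0:\inf_{\Delta:|\Delta/\sigma_0|\le b}\mathrm P_\Delta\big(|\hat\tau_{\rm PT}-\tau|\le L(1+\gamma)^{-1/2}\sigma_0\big)\ge 1-\zeta\Big\}. \] Then $\hat L_{\rm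 PT}$ is the solution in $L$ of $\min_{0\le t\le b}G_{\rm PT}(t,L)=1-\zeta$. Hence $[\hat\tau_{\rm PT}\pm \hat L_{\rm PT}(1+\gamma)^{-1/2}\sigma_0]$ is the shortest symmetric interval centered at $\hat\tau_{\rm PT}$, with data-independent half-length, having coverage at least $1-\zeta$ uniformly over $|\Delta/\sigma_0|\le b$.
   Context: Let $\tau\in\mathbb R$ be an unknown parameter and $\Delta\in\mathbb R$ an unknown bias. Let $\sigma_0,\sigma_1>0$ be known. We observe independent random variables $\hat\tau_0\sim N(\tau,\sigma_0^2)$ and $\hat\tau_1\sim N(\tau+\Delta,\sigma_1^2)$. Define $\gamma=\sigma_0^2/\sigma_1^2$ and $\sigma=\sqrt{\sigma_0^2+\sigma_1^2}$. Write $\Phi$ and $\phi$ for the standard normal CDF and density. For $a\in(0,1)$, let $c_a=\Phi^{-1}(1-a)$. Fix a tuning level $\alpha\in(0,1)$. The pretest estimator is \[ \hat\tau_{\rm PT}=\hat\tau_0+\frac{\gamma}{1+\gamma}(\hat\tau_1-\hat\tau_0)\,\mathbf 1\big(|\hat\tau_1-\hat\tau_0|\le \sigma c_{\alpha/2}\big). \] $\mathrm P_\Delta$ denotes probability under bias $\Delta$, and $\mathrm P_{\Delta/\sigma_0=t}$ means probability under $\Delta=t\sigma_0$. These probabilities do not depend on $\tau$. *)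

theory Defs
  imports "HOL-Probability.Probability"
begin

definition phi :: "real \<Rightarrow> real" where
  "phi u = std_normal_density u"

definition Phi :: "real \<Rightarrow> real" where
  "Phi x = (LBINT u:{..x}. std_normal_density u)"

definition crit :: "real \<Rightarrow> real" where
  "crit a = (THE c. Phi c = 1 - a)"

definition gam :: "real \<Rightarrow> real \<Rightarrow> real" where
  "gam s0 s1 = s0\<^sup>2 / s1\<^sup>2"

definition sig :: "real \<Rightarrow> real \<Rightarrow> real" where
  "sig s0 s1 = sqrt (s0\<^sup>2 + s1\<^sup>2)"

definition tau_PT :: "real \<Rightarrow> real \<Rightarrow> real \<Rightarrow> real \<Rightarrow> real \<Rightarrow> real" where
  "tau_PT s0 s1 alpha x0 x1 =
     x0 + gam s0 s1 / (1 + gam s0 s1) * (x1 - x0)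
        * (if \<bar>x1 - x0\<bar> \<le> sig s0 s1 * crit (alpha / 2) then 1 else 0)"

text \<open>Joint law of independent tau0_hat ~ N(tau, s0^2), tau1_hat ~ N(tau + Delta, s1^2).\<close>
definition obs_model :: "real \<Rightarrow> real \<Rightarrow> real \<Rightarrow> real \<Rightarrow> (real \<times> real) measure" where
  "obs_model s0 s1 tau Delta =
     density lborel (normal_density tau s0) \<Otimes>\<^sub>M density lborel (normal_density (tau + Delta) s1)"

definition cover_prob :: "real \<Rightarrow> real \<Rightarrow> real \<Rightarrow> real \<Rightarrow> real \<Rightarrow> real \<Rightarrow> real" where
  "cover_prob s0 s1 alpha tau Delta L =
     measure (obs_model s0 s1 tau Delta)
       {p. \<bar>tau_PT s0 s1 alpha (fst p) (snd p) - tau\<bar> \<le> L / sqrt (1 + gam s0 s1) * s0}"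

definition G_PT :: "real \<Rightarrow> real \<Rightarrow> real \<Rightarrow> real \<Rightarrow> real \<Rightarrow> real \<Rightarrow> real" where
  "G_PT s0 s1 alpha tau t L = cover_prob s0 s1 alpha tau (t * s0) L"

definition L_hat :: "real \<Rightarrow> real \<Rightarrow> real \<Rightarrow> real \<Rightarrow> real \<Rightarrow> real \<Rightarrow> real" where
  "L_hat s0 s1 alpha tau b zeta =
     Inf {L. L \<ge> 0 \<and>
            (INF Delta\<in>{Delta. \<bar>Delta / s0\<bar> \<le> b}. cover_prob s0 s1 alpha tau Delta L) \<ge> 1 - zeta}"

end

(*
  Write d = x1 - x0, which is N(Delta, sigma^2). Conditionally on d, the observation x0 is normal
  with mean tau + (Delta - d) s0^2/sigma^2 and standard deviation s0 s1/sigma, and the pretest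
  estimator is x0 plus a shift that depends on d only. Hence the coverage probability is a normal
  average over d of the probability that a normal variable falls in a window; standardising d gives
  the integral formula (ii), and the reflection u -> -u of the standardised difference gives the
  symmetry (i).

  For (iii), G_PT(t, L) is continuous in t and, in L, strictly increasing, Lipschitz, zero at L = 0
  and tending to 1. By symmetry and compactness the worst-case coverage over |t| <= b is attained on
  [0, b]; it is again continuous and strictly increasing in L, so it crosses 1 - zeta exactly once,
  and the crossing point is L_hat.
*)
theory Submission
  imports Defs
begin

interpretation std_normal: real_distribution std_normal_distribution
  by (rule real_dist_normal_dist)

lemma measure_std_normal_distribution:
  assumes "A \<in> sets borel"
  shows "measure std_normal_distribution A = (\<integral>u. indicator A u * std_normal_density u \<partial>lborel)"
proof -
  have "(\<integral>u. indicator A u * std_normal_density u \<partial>lborel) = integral\<^sup>L std_normal_distribution (indicator A)"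
    using assms by (subst integral_density) (auto simp: mult.commute)
  then show ?thesis by simp
qed

lemma Phi_eq_cdf: "Phi = cdf std_normal_distribution"
  by (auto simp: fun_eq_iff Phi_def cdf_def set_lebesgue_integral_def measure_std_normal_distribution)

lemma std_normal_density_le_1: "std_normal_density x \<le> 1"
proof -
  have "1 / sqrt (2 * pi) \<le> 1"
    using pi_gt3 by (simp add: divide_le_eq_1 real_le_rsqrt)
  then show ?thesis
    unfolding std_normal_density_def by (intro mult_le_one) auto
qed

lemma std_normal_density_antimono:
  assumes "\<bar>x\<bar> \<le> y"
  shows "std_normal_density y \<le> std_normal_density x"
proof -
  have "x\<^sup>2 \<le> y\<^sup>2"
    using power_mono[OF assms, of 2] by simp
  then show ?thesis
    by (auto simp: std_normal_density_def intro!: divide_right_mono)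
qed

lemma measure_std_normal_Ioc_le:
  assumes "x \<le> y"
  shows "measure std_normal_distribution {x<..y} \<le> y - x"
proof -
  have "emeasure std_normal_distribution {x<..y} = (\<integral>\<^sup>+u. std_normal_density u * indicator {x<..y} u \<partial>lborel)"
    by (subst emeasure_density) (auto intro!: nn_integral_cong split: split_indicator)
  also have "\<dots> \<le> (\<integral>\<^sup>+u. 1 * indicator {x<..y} u \<partial>lborel)"
    by (intro nn_integral_mono) (auto simp: std_normal_density_le_1 split: split_indicator)
  finally show ?thesis
    using assms by (simp add: measure_def enn2real_leI)
qed

lemma measure_std_normal_Ioc_pos:
  assumes "x < y"
  shows "0 < measure std_normal_distribution {x<..y}"
proof -
  define m where "m = std_normal_density (max \<bar>x\<bar> \<bar>y\<bar>)"
  have "0 \<le> m"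
    by (simp add: m_def)
  then have "ennreal (m * (y - x)) = (\<integral>\<^sup>+u. ennreal m * indicator {x<..y} u \<partial>lborel)"
    using assms by (subst nn_integral_cmult_indicator) (auto simp: ennreal_mult)
  also have "\<dots> \<le> (\<integral>\<^sup>+u. std_normal_density u * indicator {x<..y} u \<partial>lborel)"
    unfolding m_def
    by (intro nn_integral_mono) (auto intro!: std_normal_density_antimono split: split_indicator)
  also have "\<dots> = emeasure std_normal_distribution {x<..y}"
    by (subst emeasure_density) (auto intro!: nn_integral_cong split: split_indicator)
  finally have "m * (y - x) \<le> measure std_normal_distribution {x<..y}"
    by (simp add: std_normal.emeasure_eq_measure)
  moreover have "0 < m * (y - x)"
    using assms by (simp add: m_def normal_density_pos)
  ultimately show ?thesis by linarith
qed

lemma Phi_diff: "x \<le> y \<Longrightarrow> Phi y - Phi x = measure std_normal_distribution {x<..y}"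
  unfolding Phi_eq_cdf
  by (cases "x = y") (simp_all add: std_normal.cdf_diff_eq)

lemma Phi_nonneg: "0 \<le> Phi x"
  by (simp add: Phi_eq_cdf std_normal.cdf_nonneg)

lemma Phi_le_1: "Phi x \<le> 1"
  by (simp add: Phi_eq_cdf std_normal.cdf_bounded_prob)

lemma Phi_mono: "x \<le> y \<Longrightarrow> Phi x \<le> Phi y"
  by (simp add: Phi_eq_cdf std_normal.cdf_nondecreasing)

lemma Phi_strict_mono: "x < y \<Longrightarrow> Phi x < Phi y"
  using Phi_diff[of x y] measure_std_normal_Ioc_pos[of x y] by simp

lemma Phi_tendsto_at_top: "(Phi \<longlongrightarrow> 1) at_top"
  by (simp add: Phi_eq_cdf std_normal.cdf_lim_at_top_prob)

lemma lipschitz_on_Phi: "1-lipschitz_on UNIV Phi"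
proof (rule lipschitz_onI)
  fix x y :: real
  have "\<bar>Phi y - Phi x\<bar> \<le> y - x" if "x \<le> y" for x y
    using that Phi_diff[OF that] measure_std_normal_Ioc_le[OF that] Phi_mono[OF that] by simp
  from this[of x y] this[of y x] show "dist (Phi x) (Phi y) \<le> 1 * dist x y"
    by (cases "x \<le> y") (auto simp: dist_real_def abs_minus_commute)
qed simp

lemma continuous_on_Phi [continuous_intros]: "continuous_on A f \<Longrightarrow> continuous_on A (\<lambda>x. Phi (f x))"
  using continuous_on_compose2[OF lipschitz_on_continuous_on[OF lipschitz_on_Phi]] by blast

lemma borel_measurable_Phi [measurable]: "Phi \<in> borel_measurable borel"
  by (intro borel_measurable_continuous_onI continuous_on_Phi continuous_on_id)

lemma measure_std_normal_singleton: "measure std_normal_distribution {x} = 0"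
proof -
  have "isCont Phi x"
    using lipschitz_on_continuous_on[OF lipschitz_on_Phi] by (simp add: continuous_on_eq_continuous_at)
  then show ?thesis
    by (simp add: Phi_eq_cdf std_normal.isCont_cdf)
qed

lemma measure_std_normal_Icc: "x \<le> y \<Longrightarrow> measure std_normal_distribution {x..y} = Phi y - Phi x"
proof -
  assume "x \<le> y"
  then have "{x..y} = {x} \<union> {x<..y}" by auto
  moreover have "measure std_normal_distribution ({x} \<union> {x<..y})
      = measure std_normal_distribution {x} + measure std_normal_distribution {x<..y}"
    by (rule std_normal.finite_measure_Union) auto
  ultimately show ?thesis
    using Phi_diff[OF \<open>x \<le> y\<close>] measure_std_normal_singleton by simp
qed

lemma Phi_minus: "Phi (- x) = 1 - Phi x"
proof -
  have "Phi (- x) = (\<integral>u. indicator {..-x} u * std_normal_density u \<partial>lborel)"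
    by (simp add: Phi_def set_lebesgue_integral_def)
  also have "\<dots> = (\<integral>u. indicator {x..} u * std_normal_density u \<partial>lborel)"
    by (subst lborel_integral_real_affine[where c = "-1" and t = 0])
      (auto simp: std_normal_density_def indicator_def)
  also have "\<dots> = measure std_normal_distribution ({x} \<union> (UNIV - {..x}))"
    by (subst measure_std_normal_distribution) (auto intro!: Bochner_Integration.integral_cong split: split_indicator)
  also have "\<dots> = measure std_normal_distribution {x} + measure std_normal_distribution (UNIV - {..x})"
    by (rule std_normal.finite_measure_Union) auto
  also have "\<dots> = 1 - Phi x"
    using std_normal.prob_compl[of "{..x}"]
    by (simp add: measure_std_normal_singleton Phi_eq_cdf cdf_def)
  finally show ?thesis .
qed

lemma crit_pos:
  assumes "0 < a" "a < 1/2"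
  shows "0 < crit a"
proof -
  have "eventually (\<lambda>x. 1 - a < Phi x) at_top"
    using Phi_tendsto_at_top assms by (intro order_tendstoD) auto
  then obtain x where x: "0 \<le> x" "1 - a < Phi x"
    by (metis eventually_at_top_linorder max.cobounded1 max.cobounded2)
  have "Phi 0 = 1/2"
    using Phi_minus[of 0] by simp
  then obtain c where c: "Phi c = 1 - a"
    using IVT[of Phi 0 "1 - a" x] x assms lipschitz_on_continuous_on[OF lipschitz_on_Phi]
    by (auto simp: continuous_on_eq_continuous_at)
  have "crit a = c"
    unfolding crit_def
  proof (rule the_equality)
    show "c' = c" if "Phi c' = 1 - a" for c'
      using that c Phi_strict_mono[of c c'] Phi_strict_mono[of c' c] by (cases c c' rule: linorder_cases) auto
  qed (fact c)
  moreover have "Phi 0 < Phi c"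
    using c assms \<open>Phi 0 = 1/2\<close> by simp
  ultimately show ?thesis
    using Phi_mono[of c 0] by (cases "0 < c") auto
qed

definition Phi_window :: "real \<Rightarrow> real \<Rightarrow> real" where
  "Phi_window x L = Phi (L + x) - Phi (- L + x)"

lemma Phi_window_nonneg: "0 \<le> L \<Longrightarrow> 0 \<le> Phi_window x L"
  by (simp add: Phi_window_def Phi_mono)

lemma Phi_window_le_1: "Phi_window x L \<le> 1"
  using Phi_le_1[of "L + x"] Phi_nonneg[of "- L + x"] by (simp add: Phi_window_def)

lemma Phi_window_zero [simp]: "Phi_window x 0 = 0"
  by (simp add: Phi_window_def)

lemma Phi_window_uminus [simp]: "Phi_window (- x) L = Phi_window x L"
  using Phi_minus[of "L + x"] Phi_minus[of "- L + x"] by (simp add: Phi_window_def algebra_simps)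

lemma Phi_window_strict_mono: "L < L' \<Longrightarrow> Phi_window x L < Phi_window x L'"
  using Phi_strict_mono[of "L + x" "L' + x"] Phi_strict_mono[of "- L' + x" "- L + x"]
  by (simp add: Phi_window_def)

lemma Phi_window_lipschitz: "\<bar>Phi_window x L - Phi_window x L'\<bar> \<le> 2 * \<bar>L - L'\<bar>"
  using lipschitz_onD[OF lipschitz_on_Phi, of "L + x" "L' + x"] lipschitz_onD[OF lipschitz_on_Phi, of "- L + x" "- L' + x"]
  by (auto simp: Phi_window_def dist_real_def abs_le_iff abs_minus_commute[of L'])

lemma Phi_window_tendsto_1: "(Phi_window x \<longlongrightarrow> 1) at_top"
proof -
  have shift: "filterlim (\<lambda>L. L + y) at_top at_top" for y :: real
    using filterlim_tendsto_add_at_top[OF tendsto_const filterlim_ident, of y] by (simp add: add.commute)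
  have "((\<lambda>L. Phi (L + x) - (1 - Phi (L + - x))) \<longlongrightarrow> 1 - (1 - 1)) at_top"
    by (intro tendsto_intros filterlim_compose[OF Phi_tendsto_at_top shift])
  then show ?thesis
    using Phi_minus[of "L - x" for L] by (simp add: Phi_window_def[abs_def])
qed

lemma borel_measurable_Phi_window [measurable (raw)]:
  assumes [measurable]: "f \<in> borel_measurable M" "g \<in> borel_measurable M"
  shows "(\<lambda>x. Phi_window (f x) (g x)) \<in> borel_measurable M"
  unfolding Phi_window_def by measurable

lemma normal_density_standardize:
  assumes "0 < s"
  shows "s * normal_density \<mu> s (\<mu> + s * v) = std_normal_density v"
  using assms by (simp add: normal_density_def real_sqrt_mult power_mult_distrib)

lemma nn_integral_normal_density_window:
  assumes s: "0 < s" and l: "0 \<le> l"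
  shows "(\<integral>\<^sup>+x. normal_density \<mu> s x * indicator {m - l..m + l} x \<partial>lborel)
       = ennreal (Phi_window ((m - \<mu>) / s) (l / s))"
proof -
  define lo hi where "lo = (m - l - \<mu>) / s" and "hi = (m + l - \<mu>) / s"
  have "(\<integral>\<^sup>+x. normal_density \<mu> s x * indicator {m - l..m + l} x \<partial>lborel)
      = s * (\<integral>\<^sup>+v. normal_density \<mu> s (\<mu> + s * v) * indicator {m - l..m + l} (\<mu> + s * v) \<partial>lborel)"
    using s by (subst nn_integral_real_affine[where c = s and t = \<mu>]) auto
  also have "\<dots> = (\<integral>\<^sup>+v. std_normal_density v * indicator {lo..hi} v \<partial>lborel)"
  proof -
    have "\<mu> + s * v \<in> {m - l..m + l} \<longleftrightarrow> v \<in> {lo..hi}" for v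
      using s by (simp add: lo_def hi_def field_simps)
    then show ?thesis
      using s by (subst nn_integral_cmult[symmetric])
        (auto intro!: nn_integral_cong simp: ennreal_mult[symmetric] normal_density_standardize[OF s]
          mult.assoc[symmetric] split: split_indicator)
  qed
  also have "\<dots> = emeasure std_normal_distribution {lo..hi}"
    by (subst emeasure_density) (auto intro!: nn_integral_cong split: split_indicator)
  also have "\<dots> = ennreal (Phi hi - Phi lo)"
    using s l by (simp add: std_normal.emeasure_eq_measure measure_std_normal_Icc lo_def hi_def divide_right_mono)
  also have "\<dots> = ennreal (Phi_window ((m - \<mu>) / s) (l / s))"
    by (simp add: Phi_window_def lo_def hi_def diff_divide_distrib add_divide_distrib algebra_simps)
  finally show ?thesis .
qed

lemma gaussian_exponents_split:
  fixes a b y e :: real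
  assumes a: "0 < a" and b: "0 < b"
  shows "-y\<^sup>2/(2*a) + -(y+e)\<^sup>2/(2*b) = -e\<^sup>2/(2*(a+b)) + -(y + e*a/(a+b))\<^sup>2/(2*(a*b/(a+b)))"
proof -
  from a b have ab: "a + b \<noteq> 0" by simp
  have cancel: "-(X/K)\<^sup>2/(2*(a*b/K)) = -X\<^sup>2/(2*a*b*K)" if "K \<noteq> 0" for X K :: real
    using a b that by (simp add: field_simps power2_eq_square)
  have common: "y + e*a/(a+b) = ((a+b)*y + e*a)/(a+b)"
    using ab by (simp add: field_simps)
  show ?thesis
    unfolding common cancel[OF ab] using a b ab
    by (simp add: divide_simps) (simp add: power2_eq_square algebra_simps)
qed

lemma normal_density_pair_split:
  fixes s0 s1 S :: real
  assumes s0: "0 < s0" and s1: "0 < s1" and S: "0 < S" "S\<^sup>2 = s0\<^sup>2 + s1\<^sup>2"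
  shows "normal_density tau s0 x * normal_density (tau + D) s1 (x + d)
       = normal_density D S d * normal_density (tau + (D - d) * s0\<^sup>2 / S\<^sup>2) (s0 * s1 / S) x"
proof -
  have r: "0 < s0 * s1 / S" using s0 s1 S by simp
  have e: "-(x - tau)\<^sup>2 / (2 * s0\<^sup>2) + -(x + d - (tau + D))\<^sup>2 / (2 * s1\<^sup>2)
      = -(d - D)\<^sup>2 / (2 * S\<^sup>2) + -(x - (tau + (D - d) * s0\<^sup>2 / S\<^sup>2))\<^sup>2 / (2 * (s0 * s1 / S)\<^sup>2)"
  proof -
    have 1: "x + d - (tau + D) = (x - tau) + (d - D)" by simp
    have 2: "x - (tau + (D - d) * s0\<^sup>2 / S\<^sup>2) = (x - tau) + (d - D) * s0\<^sup>2 / (s0\<^sup>2 + s1\<^sup>2)"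
      unfolding S(2) by (simp add: algebra_simps add_divide_distrib[symmetric])
    have 3: "(s0 * s1 / S)\<^sup>2 = s0\<^sup>2 * s1\<^sup>2 / (s0\<^sup>2 + s1\<^sup>2)"
      unfolding power_divide power_mult_distrib S(2) ..
    show ?thesis
      unfolding 1 2 3 unfolding S(2) using s0 s1 by (intro gaussian_exponents_split) auto
  qed
  have nd: "normal_density m s y * normal_density m' s' y'
      = exp (-(y - m)\<^sup>2 / (2 * s\<^sup>2) + -(y' - m')\<^sup>2 / (2 * s'\<^sup>2)) / (2 * pi * s * s')"
    if "0 < s" "0 < s'" for m s y m' s' y'
  proof -
    have "normal_density m s y = exp (-(y - m)\<^sup>2 / (2 * s\<^sup>2)) / (sqrt (2 * pi) * s)"
      if "0 < s" for m s y
      using that by (simp add: normal_density_def real_sqrt_mult)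
    moreover have "sqrt (2 * pi) * sqrt (2 * pi) = 2 * pi" by simp
    ultimately show ?thesis
      unfolding exp_add using that by (simp add: mult_ac)
  qed
  show ?thesis
    unfolding nd[OF s0 s1] nd[OF S(1) r] e using s0 s1 S by simp
qed

lemma emeasure_pair_density_shear:
  fixes f0 f1 :: "real \<Rightarrow> real"
  assumes [measurable]: "f0 \<in> borel_measurable borel" "f1 \<in> borel_measurable borel"
    and E [measurable]: "E \<in> sets (borel \<Otimes>\<^sub>M borel)"
    and "prob_space (density lborel f1)"
  shows "emeasure (density lborel f0 \<Otimes>\<^sub>M density lborel f1) E
       = (\<integral>\<^sup>+d. \<integral>\<^sup>+x. ennreal (f0 x) * ennreal (f1 (x + d)) * indicator E (x, x + d) \<partial>lborel \<partial>lborel)"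
proof -
  define M0 M1 where "M0 = density lborel f0" and "M1 = density lborel f1"
  interpret M1: prob_space M1
    unfolding M1_def by fact
  have [simp]: "sets M0 = sets borel" "sets M1 = sets borel"
    unfolding M0_def M1_def by auto
  have "E \<in> sets (M0 \<Otimes>\<^sub>M M1)"
    using E by (simp add: sets_pair_measure_cong[of M0 borel M1 borel])
  then have "emeasure (M0 \<Otimes>\<^sub>M M1) E = (\<integral>\<^sup>+x. emeasure M1 (Pair x -` E) \<partial>M0)"
    by (rule M1.emeasure_pair_measure_alt)
  also have "\<dots> = (\<integral>\<^sup>+x. ennreal (f0 x) * (\<integral>\<^sup>+y. ennreal (f1 y) * indicator E (x, y) \<partial>lborel) \<partial>lborel)"
  proof -
    have "emeasure M1 (Pair x -` E) = (\<integral>\<^sup>+y. ennreal (f1 y) * indicator E (x, y) \<partial>lborel)" for x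
    proof -
      have "Pair x -` E \<in> sets borel" by measurable
      then show ?thesis
        unfolding M1_def by (subst emeasure_density) (auto intro!: nn_integral_cong split: split_indicator)
    qed
    then show ?thesis
      unfolding M0_def by (subst nn_integral_density) simp_all
  qed
  also have "\<dots> = (\<integral>\<^sup>+x. \<integral>\<^sup>+d. ennreal (f0 x) * ennreal (f1 (x + d)) * indicator E (x, x + d) \<partial>lborel \<partial>lborel)"
  proof (rule nn_integral_cong)
    fix x
    have "(\<integral>\<^sup>+y. ennreal (f1 y) * indicator E (x, y) \<partial>lborel)
        = (\<integral>\<^sup>+d. ennreal (f1 (x + d)) * indicator E (x, x + d) \<partial>lborel)"
      by (subst nn_integral_real_affine[where c = 1 and t = x]) auto
    then show "ennreal (f0 x) * (\<integral>\<^sup>+y. ennreal (f1 y) * indicator E (x, y) \<partial>lborel)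
        = (\<integral>\<^sup>+d. ennreal (f0 x) * ennreal (f1 (x + d)) * indicator E (x, x + d) \<partial>lborel)"
      by (simp add: nn_integral_cmult[symmetric] mult.assoc)
  qed
  also have "\<dots> = (\<integral>\<^sup>+d. \<integral>\<^sup>+x. ennreal (f0 x) * ennreal (f1 (x + d)) * indicator E (x, x + d) \<partial>lborel \<partial>lborel)"
    by (rule lborel_pair.Fubini') measurable
  finally show ?thesis
    unfolding M0_def M1_def .
qed

lemma emeasure_normal_pair_band_conditional:
  fixes s0 s1 S l :: real and shift :: "real \<Rightarrow> real"
  assumes s0: "0 < s0" and s1: "0 < s1" and S: "0 < S" "S\<^sup>2 = s0\<^sup>2 + s1\<^sup>2" and l: "0 \<le> l"
    and [measurable]: "shift \<in> borel_measurable borel"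
  shows "emeasure (density lborel (normal_density tau s0) \<Otimes>\<^sub>M density lborel (normal_density (tau + D) s1))
           {p. \<bar>fst p + shift (snd p - fst p) - tau\<bar> \<le> l}
       = (\<integral>\<^sup>+d. normal_density D S d
              * Phi_window (((d - D) * s0\<^sup>2 / S\<^sup>2 - shift d) / (s0 * s1 / S)) (l / (s0 * s1 / S)) \<partial>lborel)"
proof -
  define E where "E = {p. \<bar>fst p + shift (snd p - fst p) - tau\<bar> \<le> l}"
  define r where "r = s0 * s1 / S"
  define cond_mean where "cond_mean d = tau + (D - d) * s0\<^sup>2 / S\<^sup>2" for d
  have r: "0 < r"
    using s0 s1 S by (simp add: r_def)
  have "Measurable.pred (borel \<Otimes>\<^sub>M borel) (\<lambda>p. \<bar>fst p + shift (snd p - fst p) - tau\<bar> \<le> l)"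
    by measurable
  then have [measurable]: "E \<in> sets (borel \<Otimes>\<^sub>M borel)"
    by (simp add: E_def Measurable.pred_def space_pair_measure)
  have "emeasure (density lborel (normal_density tau s0) \<Otimes>\<^sub>M density lborel (normal_density (tau + D) s1)) E
      = (\<integral>\<^sup>+d. \<integral>\<^sup>+x. ennreal (normal_density tau s0 x) * ennreal (normal_density (tau + D) s1 (x + d))
            * indicator E (x, x + d) \<partial>lborel \<partial>lborel)"
    using s1 by (intro emeasure_pair_density_shear prob_space_normal_density) simp_all
  also have "\<dots> = (\<integral>\<^sup>+d. normal_density D S d
      * (\<integral>\<^sup>+x. normal_density (cond_mean d) r x * indicator {tau - shift d - l..tau - shift d + l} x \<partial>lborel) \<partial>lborel)"
  proof (intro nn_integral_cong)
    fix d
    have "(x, x + d) \<in> E \<longleftrightarrow> x \<in> {tau - shift d - l..tau - shift d + l}" for x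
      by (auto simp: E_def abs_le_iff)
    then show "(\<integral>\<^sup>+x. ennreal (normal_density tau s0 x) * ennreal (normal_density (tau + D) s1 (x + d))
            * indicator E (x, x + d) \<partial>lborel)
        = normal_density D S d
          * (\<integral>\<^sup>+x. normal_density (cond_mean d) r x * indicator {tau - shift d - l..tau - shift d + l} x \<partial>lborel)"
      by (subst nn_integral_cmult[symmetric])
        (auto intro!: nn_integral_cong simp: ennreal_mult[symmetric] mult.assoc[symmetric]
          normal_density_pair_split[OF s0 s1 S] cond_mean_def r_def split: split_indicator)
  qed
  also have "\<dots> = (\<integral>\<^sup>+d. normal_density D S d * Phi_window ((tau - shift d - cond_mean d) / r) (l / r) \<partial>lborel)"
    using r l by (simp add: nn_integral_normal_density_window ennreal_mult[symmetric] Phi_window_nonneg)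
  also have "(\<lambda>d. tau - shift d - cond_mean d) = (\<lambda>d. (d - D) * s0\<^sup>2 / S\<^sup>2 - shift d)"
    using S(1) by (simp add: cond_mean_def fun_eq_iff field_simps)
  finally show ?thesis
    unfolding E_def r_def .
qed

lemma emeasure_normal_pair_band:
  fixes s0 s1 l :: real and shift :: "real \<Rightarrow> real"
  assumes s0: "0 < s0" and s1: "0 < s1" and l: "0 \<le> l"
    and [measurable]: "shift \<in> borel_measurable borel"
  defines "S \<equiv> sqrt (s0\<^sup>2 + s1\<^sup>2)"
  shows "emeasure (density lborel (normal_density tau s0) \<Otimes>\<^sub>M density lborel (normal_density (tau + D) s1))
           {p. \<bar>fst p + shift (snd p - fst p) - tau\<bar> \<le> l}
       = (\<integral>\<^sup>+u. std_normal_density u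
              * Phi_window ((u * s0\<^sup>2 / S - shift (D + S * u)) / (s0 * s1 / S)) (l / (s0 * s1 / S)) \<partial>lborel)"
proof -
  define r where "r = s0 * s1 / S"
  have S: "0 < S" "S\<^sup>2 = s0\<^sup>2 + s1\<^sup>2"
    using s0 s1 by (simp_all add: S_def add_pos_nonneg)
  have r: "0 < r"
    using s0 s1 S by (simp add: r_def)
  have "emeasure (density lborel (normal_density tau s0) \<Otimes>\<^sub>M density lborel (normal_density (tau + D) s1))
           {p. \<bar>fst p + shift (snd p - fst p) - tau\<bar> \<le> l}
      = (\<integral>\<^sup>+d. normal_density D S d * Phi_window (((d - D) * s0\<^sup>2 / S\<^sup>2 - shift d) / r) (l / r) \<partial>lborel)"
    unfolding r_def by (rule emeasure_normal_pair_band_conditional[OF s0 s1 S l]) simp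
  also have "\<dots> = S * (\<integral>\<^sup>+u. normal_density D S (D + S * u)
      * Phi_window (((D + S * u - D) * s0\<^sup>2 / S\<^sup>2 - shift (D + S * u)) / r) (l / r) \<partial>lborel)"
    using S by (subst nn_integral_real_affine[where c = S and t = D]) auto
  also have "\<dots> = (\<integral>\<^sup>+u. std_normal_density u * Phi_window ((u * s0\<^sup>2 / S - shift (D + S * u)) / r) (l / r) \<partial>lborel)"
  proof -
    have "(D + S * u - D) * s0\<^sup>2 / S\<^sup>2 = u * s0\<^sup>2 / S" for u
      using S(1) by (simp add: field_simps power2_eq_square)
    then show ?thesis
      using S r l
      by (subst nn_integral_cmult[symmetric])
        (auto intro!: nn_integral_cong simp: ennreal_mult[symmetric] mult.assoc[symmetric]
          normal_density_standardize Phi_window_nonneg)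
  qed
  finally show ?thesis
    unfolding r_def .
qed

lemma integrable_std_normal_density_mult:
  fixes f :: "real \<Rightarrow> real"
  assumes [measurable]: "f \<in> borel_measurable borel" and "\<And>u. \<bar>f u\<bar> \<le> 1"
  shows "integrable lborel (\<lambda>u. std_normal_density u * f u)"
proof (rule Bochner_Integration.integrable_bound)
  show "integrable lborel std_normal_density"
    by simp
  show "AE u in lborel. norm (std_normal_density u * f u) \<le> norm (std_normal_density u)"
    using assms(2) by (auto simp: abs_mult intro!: mult_left_le)
qed simp

lemma abs_set_integral_diff_le:
  fixes f :: "real \<Rightarrow> real"
  assumes f: "integrable lborel f" and bound: "\<And>u. \<bar>f u\<bar> \<le> K"
    and [measurable]: "A \<in> sets borel" "B \<in> sets borel"
    and AB: "\<And>u. \<bar>indicator A u - indicator B u\<bar> \<le> (indicator {a..b} u :: real)" and "a \<le> b"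
  shows "\<bar>(LBINT u:A. f u) - (LBINT u:B. f u)\<bar> \<le> K * (b - a)"
proof -
  have int: "integrable lborel (\<lambda>u. indicator C u * f u)" if "C \<in> sets borel" for C
    using integrable_mult_indicator[of C lborel f] that f by simp
  have "(LBINT u:A. f u) - (LBINT u:B. f u) = (\<integral>u. (indicator A u - indicator B u) * f u \<partial>lborel)"
    using int[of A] int[of B] by (simp add: set_lebesgue_integral_def left_diff_distrib)
  also have "\<bar>\<dots>\<bar> \<le> (\<integral>u. \<bar>(indicator A u - indicator B u) * f u\<bar> \<partial>lborel)"
    by (rule integral_abs_bound)
  also have "\<dots> \<le> (\<integral>u. K * indicator {a..b} u \<partial>lborel)"
  proof (rule integral_mono)
    show "integrable lborel (\<lambda>u. \<bar>(indicator A u - indicator B u) * f u\<bar>)"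
      using int[of A] int[of B] by (simp add: left_diff_distrib)
    show "integrable lborel (\<lambda>u. K * indicator {a..b} u :: real)"
      using \<open>a \<le> b\<close> by (simp add: integrable_indicator_iff emeasure_lborel_Icc)
    show "\<bar>(indicator A u - indicator B u) * f u\<bar> \<le> K * indicator {a..b} u" for u
      using mult_mono[OF AB[of u] bound[of u]] by (simp add: abs_mult mult.commute)
  qed
  also have "\<dots> = K * (b - a)"
    using \<open>a \<le> b\<close> by simp
  finally show ?thesis .
qed

lemma lipschitz_on_set_integral_atMost:
  fixes f :: "real \<Rightarrow> real"
  assumes "integrable lborel f" and "\<And>u. \<bar>f u\<bar> \<le> K"
  shows "K-lipschitz_on UNIV (\<lambda>x. LBINT u:{..x}. f u)"
proof (rule lipschitz_onI)
  show "dist (LBINT u:{..x}. f u) (LBINT u:{..y}. f u) \<le> K * dist x y" for x y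
  proof -
    have "\<bar>indicator {..x} u - indicator {..y} u\<bar> \<le> (indicator {min x y..max x y} u :: real)" for u
      by (auto simp: indicator_def)
    then have "\<bar>(LBINT u:{..x}. f u) - (LBINT u:{..y}. f u)\<bar> \<le> K * (max x y - min x y)"
      by (intro abs_set_integral_diff_le[OF assms]) auto
    then show ?thesis
      by (simp add: dist_real_def max_def min_def split: if_splits)
  qed
  show "0 \<le> K"
    using assms(2)[of 0] by simp
qed

lemma lipschitz_on_set_integral_atLeast:
  fixes f :: "real \<Rightarrow> real"
  assumes "integrable lborel f" and "\<And>u. \<bar>f u\<bar> \<le> K"
  shows "K-lipschitz_on UNIV (\<lambda>x. LBINT u:{x..}. f u)"
proof (rule lipschitz_onI)
  show "dist (LBINT u:{x..}. f u) (LBINT u:{y..}. f u) \<le> K * dist x y" for x y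
  proof -
    have "\<bar>indicator {x..} u - indicator {y..} u\<bar> \<le> (indicator {min x y..max x y} u :: real)" for u
      by (auto simp: indicator_def)
    then have "\<bar>(LBINT u:{x..}. f u) - (LBINT u:{y..}. f u)\<bar> \<le> K * (max x y - min x y)"
      by (intro abs_set_integral_diff_le[OF assms]) auto
    then show ?thesis
      by (simp add: dist_real_def max_def min_def split: if_splits)
  qed
  show "0 \<le> K"
    using assms(2)[of 0] by simp
qed

lemma compact_incseq_exceeds_uniformly:
  fixes f :: "nat \<Rightarrow> 'a::topological_space \<Rightarrow> real"
  assumes "compact T" and cont: "\<And>n. continuous_on UNIV (f n)"
    and mono: "\<And>t. t \<in> T \<Longrightarrow> incseq (\<lambda>n. f n t)" and exceeds: "\<And>t. t \<in> T \<Longrightarrow> \<exists>n. y < f n t"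
  shows "\<exists>N. \<forall>t\<in>T. y < f N t"
proof -
  have "open {t. y < f n t}" for n
    by (intro open_Collect_less continuous_on_const cont)
  moreover have "T \<subseteq> (\<Union>n. {t. y < f n t})"
    using exceeds by blast
  ultimately obtain C where C: "finite C" "T \<subseteq> (\<Union>n\<in>C. {t. y < f n t})"
    using \<open>compact T\<close> by (metis compactE_image)
  have "y < f (Max C) t" if t: "t \<in> T" for t
  proof -
    obtain n where "n \<in> C" "y < f n t"
      using C t by blast
    moreover have "f n t \<le> f (Max C) t"
      using mono[OF t] C(1) \<open>n \<in> C\<close> by (simp add: incseq_def)
    ultimately show ?thesis
      by simp
  qed
  then show ?thesis
    by blast
qed

locale coverage_family =
  fixes G :: "real \<Rightarrow> real \<Rightarrow> real" and K :: real
  assumes continuous: "\<And>L. 0 \<le> L \<Longrightarrow> continuous_on UNIV (\<lambda>t. G t L)"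
    and lipschitz: "\<And>t L L'. 0 \<le> L \<Longrightarrow> 0 \<le> L' \<Longrightarrow> \<bar>G t L - G t L'\<bar> \<le> K * \<bar>L - L'\<bar>"
    and strict_mono: "\<And>t L L'. 0 \<le> L \<Longrightarrow> L < L' \<Longrightarrow> G t L < G t L'"
    and zero: "\<And>t. G t 0 = 0"
    and tendsto_1: "\<And>t. (\<lambda>n. G t (real n)) \<longlonglongrightarrow> 1"
    and symmetric: "\<And>t L. 0 \<le> L \<Longrightarrow> G (- t) L = G t L"
begin

definition worst_cover :: "real \<Rightarrow> real \<Rightarrow> real" where
  "worst_cover b L = (INF t\<in>{t. \<bar>t\<bar> \<le> b}. G t L)"

lemma worst_cover_attained:
  assumes b: "0 \<le> b" and L: "0 \<le> L"
  obtains t0 where "t0 \<in> {0..b}" "worst_cover b L = G t0 L" "\<And>t. \<bar>t\<bar> \<le> b \<Longrightarrow> G t0 L \<le> G t L"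
proof -
  obtain t0 where t0: "t0 \<in> {0..b}" "\<And>t. t \<in> {0..b} \<Longrightarrow> G t0 L \<le> G t L"
    using continuous_attains_inf[of "{0..b}" "\<lambda>t. G t L"] b continuous_on_subset[OF continuous[OF L]]
    by auto
  have min: "G t0 L \<le> G t L" if "\<bar>t\<bar> \<le> b" for t
    using t0(2)[of "\<bar>t\<bar>"] that symmetric[OF L, of t] by (cases "0 \<le> t") auto
  then have "worst_cover b L = G t0 L"
    unfolding worst_cover_def using t0(1) by (intro cInf_eq_minimum) auto
  with t0(1) min show ?thesis
    using that by blast
qed

lemma worst_cover_le: "0 \<le> b \<Longrightarrow> 0 \<le> L \<Longrightarrow> \<bar>t\<bar> \<le> b \<Longrightarrow> worst_cover b L \<le> G t L"
  by (metis worst_cover_attained)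

lemma worst_cover_zero: "0 \<le> b \<Longrightarrow> worst_cover b 0 = 0"
  by (metis worst_cover_attained zero order_refl)

lemma worst_cover_strict_mono:
  assumes "0 \<le> b" "0 \<le> L" "L < L'"
  shows "worst_cover b L < worst_cover b L'"
proof -
  obtain t' where "t' \<in> {0..b}" "worst_cover b L' = G t' L'"
    using worst_cover_attained[OF assms(1), of L'] assms by auto
  then show ?thesis
    using worst_cover_le[of b L t'] strict_mono[of L L' t'] assms by auto
qed

lemma worst_cover_continuous:
  assumes b: "0 \<le> b"
  shows "continuous_on {0..} (worst_cover b)"
proof -
  have upper: "worst_cover b L \<le> worst_cover b L' + K * \<bar>L - L'\<bar>" if L: "0 \<le> L" "0 \<le> L'" for L L'
  proof -
    obtain t' where "t' \<in> {0..b}" "worst_cover b L' = G t' L'"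
      using worst_cover_attained[OF b L(2)] by blast
    then show ?thesis
      using worst_cover_le[OF b L(1), of t'] lipschitz[OF L, of t'] by auto
  qed
  have "0 \<le> K"
    using lipschitz[of 0 1 0] by simp
  then have "K-lipschitz_on {0..} (worst_cover b)"
    using upper by (intro lipschitz_onI) (fastforce simp: dist_real_def abs_le_iff abs_minus_commute)
  then show ?thesis
    by (rule lipschitz_on_continuous_on)
qed

lemma worst_cover_exceeds:
  assumes b: "0 \<le> b" and "y < 1"
  obtains L where "0 \<le> L" "y < worst_cover b L"
proof -
  have "\<exists>N. \<forall>t\<in>{0..b}. y < G t (real N)"
  proof (rule compact_incseq_exceeds_uniformly)
    show "incseq (\<lambda>n. G t (real n))" for t
    proof (rule incseq_SucI)
      show "G t (real n) \<le> G t (real (Suc n))" for n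
        using strict_mono[of "real n" "real (Suc n)" t] by simp
    qed
    show "\<exists>n. y < G t (real n)" for t
      using order_tendstoD(1)[OF tendsto_1 \<open>y < 1\<close>] by (auto simp: eventually_sequentially)
  qed (auto intro: continuous)
  then obtain N where "\<forall>t\<in>{0..b}. y < G t (real N)"
    by blast
  then show ?thesis
    using worst_cover_attained[of b "real N"] b that by (metis of_nat_0_le_iff)
qed

lemma Inf_worst_cover_level:
  assumes b: "0 \<le> b" and z: "0 < z" "z < 1"
  defines "Lh \<equiv> Inf {L. 0 \<le> L \<and> 1 - z \<le> worst_cover b L}"
  shows "0 \<le> Lh" and "worst_cover b Lh = 1 - z"
    and "\<And>L. 0 \<le> L \<Longrightarrow> worst_cover b L = 1 - z \<Longrightarrow> L = Lh"
    and "\<And>L. 0 \<le> L \<Longrightarrow> L < Lh \<Longrightarrow> worst_cover b L < 1 - z"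
proof -
  obtain N where N: "0 \<le> N" "1 - z < worst_cover b N"
    using worst_cover_exceeds[OF b, of "1 - z"] z by auto
  then obtain Ls where Ls: "0 \<le> Ls" "worst_cover b Ls = 1 - z"
    using IVT'[of "worst_cover b" 0 "1 - z" N] worst_cover_zero[OF b] z
      continuous_on_subset[OF worst_cover_continuous[OF b]]
    by force
  have unique: "L = Ls" if "0 \<le> L" "worst_cover b L = 1 - z" for L
    using worst_cover_strict_mono[OF b, of L Ls] worst_cover_strict_mono[OF b, of Ls L] that Ls
    by (cases L Ls rule: linorder_cases) auto
  have "Lh = Ls"
    unfolding Lh_def
  proof (rule cInf_eq_minimum)
    show "Ls \<le> L" if "L \<in> {L. 0 \<le> L \<and> 1 - z \<le> worst_cover b L}" for L
      using that Ls worst_cover_strict_mono[OF b, of L Ls] by force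
  qed (use Ls in auto)
  then show "0 \<le> Lh" "worst_cover b Lh = 1 - z"
    using Ls by simp_all
  show "L = Lh" if "0 \<le> L" "worst_cover b L = 1 - z" for L
    using unique[OF that] \<open>Lh = Ls\<close> by simp
  show "worst_cover b L < 1 - z" if "0 \<le> L" "L < Lh" for L
    using worst_cover_strict_mono[OF b that(1), of Ls] that \<open>Lh = Ls\<close> Ls by simp
qed

end

locale pretest =
  fixes s0 s1 alpha tau :: real
  assumes s0_pos: "0 < s0" and s1_pos: "0 < s1" and alpha: "0 < alpha" "alpha < 1"
begin

abbreviation "S \<equiv> sig s0 s1"
abbreviation "g \<equiv> gam s0 s1"
abbreviation "c \<equiv> crit (alpha / 2)"

lemma sig_pos: "0 < S"
  using s0_pos by (simp add: sig_def add_pos_nonneg)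

lemma sig_square: "S\<^sup>2 = s0\<^sup>2 + s1\<^sup>2"
  by (simp add: sig_def)

lemma crit_half_alpha_pos: "0 < c"
  using alpha by (intro crit_pos) auto

lemma sqrt_gam: "sqrt g = s0 / s1"
  using s0_pos s1_pos by (simp add: gam_def real_sqrt_divide)

lemma sqrt_one_plus_gam: "sqrt (1 + g) = S / s1"
proof -
  have "1 + g = (S / s1)\<^sup>2"
    unfolding gam_def power_divide sig_square using s1_pos by (simp add: field_simps)
  then show ?thesis
    using sig_pos s1_pos by simp
qed

lemma gam_ratio: "g / (1 + g) = s0\<^sup>2 / S\<^sup>2"
  using s0_pos s1_pos by (simp add: gam_def sig_square field_simps add_pos_nonneg)

lemma sqrt_gam_ratio: "sqrt (g / (1 + g)) = s0 / S"
  using s0_pos sig_pos by (simp add: gam_ratio real_sqrt_divide)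

lemma gam_div_sqrt: "g / sqrt (1 + g) = s0\<^sup>2 / (s1 * S)"
  unfolding sqrt_one_plus_gam using s1_pos sig_pos by (simp add: gam_def field_simps power2_eq_square)

definition pretest_shift :: "real \<Rightarrow> real" where
  "pretest_shift d = g / (1 + g) * d * (if \<bar>d\<bar> \<le> S * c then 1 else 0)"

lemma tau_PT_eq: "tau_PT s0 s1 alpha x0 x1 = x0 + pretest_shift (x1 - x0)"
  by (simp add: tau_PT_def pretest_shift_def)

text \<open>Coverage given the standardised difference \<open>u = (x1 - x0 - \<Delta>)/\<sigma>\<close>, where \<open>\<Delta> = t s0\<close>; the
  window is measured in units of the conditional standard deviation \<open>s0 s1/\<sigma>\<close> of \<open>x0\<close>. The
  pretest accepts iff \<open>|x1 - x0| \<le> \<sigma> c\<close>, i.e. iff \<open>|u + \<Delta>/\<sigma>| \<le> c\<close>.\<close>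
definition cond_cover :: "real \<Rightarrow> real \<Rightarrow> real \<Rightarrow> real" where
  "cond_cover t L u =
     (if \<bar>u + sqrt (g / (1 + g)) * t\<bar> \<le> c then Phi_window (- (g / sqrt (1 + g) * t)) L
      else Phi_window (sqrt g * u) L)"

lemma cond_cover_measurable [measurable]: "cond_cover t L \<in> borel_measurable borel"
  unfolding cond_cover_def by measurable

lemma cond_cover_nonneg: "0 \<le> L \<Longrightarrow> 0 \<le> cond_cover t L u"
  by (simp add: cond_cover_def Phi_window_nonneg)

lemma cond_cover_le_1: "cond_cover t L u \<le> 1"
  by (simp add: cond_cover_def Phi_window_le_1)

lemma integrable_cond_cover: "0 \<le> L \<Longrightarrow> integrable lborel (\<lambda>u. std_normal_density u * cond_cover t L u)"
  by (intro integrable_std_normal_density_mult) (auto simp: cond_cover_nonneg cond_cover_le_1)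

lemma Phi_window_cond_cover:
  "Phi_window ((u * s0\<^sup>2 / S - pretest_shift (t * s0 + S * u)) / (s0 * s1 / S)) (L / sqrt (1 + g) * s0 / (s0 * s1 / S))
     = cond_cover t L u"
proof -
  have L: "L / sqrt (1 + g) * s0 / (s0 * s1 / S) = L"
    using s0_pos s1_pos sig_pos by (simp add: sqrt_one_plus_gam)
  have accept: "\<bar>t * s0 + S * u\<bar> \<le> S * c \<longleftrightarrow> \<bar>u + sqrt (g / (1 + g)) * t\<bar> \<le> c"
  proof -
    have "t * s0 + S * u = S * (u + sqrt (g / (1 + g)) * t)"
      using sig_pos by (simp add: sqrt_gam_ratio field_simps)
    then show ?thesis
      using sig_pos by (simp add: abs_mult)
  qed
  have "(u * s0\<^sup>2 / S - g / (1 + g) * (t * s0 + S * u)) / (s0 * s1 / S) = - (g / sqrt (1 + g) * t)"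
    using s0_pos s1_pos sig_pos by (simp add: gam_ratio gam_div_sqrt field_simps power2_eq_square)
  moreover have "u * s0\<^sup>2 / S / (s0 * s1 / S) = sqrt g * u"
    using s0_pos s1_pos sig_pos by (simp add: sqrt_gam field_simps power2_eq_square)
  ultimately show ?thesis
    unfolding L cond_cover_def pretest_shift_def accept by simp
qed

lemma G_PT_eq_integral:
  assumes L: "0 \<le> L"
  shows "G_PT s0 s1 alpha tau t L = (\<integral>u. std_normal_density u * cond_cover t L u \<partial>lborel)"
proof -
  define l where "l = L / sqrt (1 + g) * s0"
  have "0 \<le> l"
    using L s0_pos s1_pos sig_pos by (simp add: l_def sqrt_one_plus_gam)
  have "emeasure (obs_model s0 s1 tau (t * s0)) {p. \<bar>fst p + pretest_shift (snd p - fst p) - tau\<bar> \<le> l}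
      = (\<integral>\<^sup>+u. std_normal_density u
           * Phi_window ((u * s0\<^sup>2 / S - pretest_shift (t * s0 + S * u)) / (s0 * s1 / S)) (l / (s0 * s1 / S)) \<partial>lborel)"
    unfolding obs_model_def sig_def
    by (rule emeasure_normal_pair_band[OF s0_pos s1_pos \<open>0 \<le> l\<close>]) (simp add: pretest_shift_def)
  also have "\<dots> = (\<integral>\<^sup>+u. std_normal_density u * cond_cover t L u \<partial>lborel)"
    by (simp only: l_def Phi_window_cond_cover)
  also have "\<dots> = ennreal (\<integral>u. std_normal_density u * cond_cover t L u \<partial>lborel)"
    using L by (intro nn_integral_eq_integral integrable_cond_cover) (auto simp: cond_cover_nonneg)
  finally show ?thesis
    using L by (simp add: G_PT_def cover_prob_def measure_def l_def tau_PT_eq cond_cover_nonneg)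
qed

lemma cond_cover_uminus: "cond_cover (- t) L (- u) = cond_cover t L u"
proof -
  have "\<bar>- u + k * - t\<bar> = \<bar>u + k * t\<bar>" for k
    by (metis abs_minus_cancel minus_add_distrib mult_minus_right)
  then show ?thesis
    by (simp add: cond_cover_def)
qed

lemma G_PT_uminus:
  assumes "0 \<le> L"
  shows "G_PT s0 s1 alpha tau (- t) L = G_PT s0 s1 alpha tau t L"
proof -
  have "(\<integral>u. std_normal_density u * cond_cover (- t) L u \<partial>lborel)
      = (\<integral>u. std_normal_density (- u) * cond_cover (- t) L (- u) \<partial>lborel)"
    using lborel_integral_real_affine[where c = "-1" and t = 0] by simp
  then show ?thesis
    using assms by (simp add: G_PT_eq_integral cond_cover_uminus std_normal_density_def)
qed

lemma cover_prob_eq_G_PT: "cover_prob s0 s1 alpha tau Delta L = G_PT s0 s1 alpha tau (Delta / s0) L"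
  using s0_pos by (simp add: G_PT_def)

lemma cover_prob_uminus: "0 \<le> L \<Longrightarrow> cover_prob s0 s1 alpha tau (- Delta) L = cover_prob s0 s1 alpha tau Delta L"
  using G_PT_uminus[of L "Delta / s0"] by (simp add: cover_prob_eq_G_PT)

lemma G_PT_formula:
  fixes t L :: real
  assumes L: "0 \<le> L"
  defines "a \<equiv> sqrt (g / (1 + g)) * t" and "d \<equiv> g / sqrt (1 + g) * t"
  shows "G_PT s0 s1 alpha tau t L =
           (Phi (c - a) - Phi (- c - a)) * (Phi (L - d) - Phi (- L - d))
           + (LBINT u:{..- c - a}. (Phi (L + sqrt g * u) - Phi (- L + sqrt g * u)) * phi u)
           + (LBINT u:{c - a..}. (Phi (L + sqrt g * u) - Phi (- L + sqrt g * u)) * phi u)"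
proof -
  define A where "A = Phi_window (- d) L"
  define h where "h u = Phi_window (sqrt g * u) L * phi u" for u
  have phi: "phi = std_normal_density"
    by (simp add: phi_def fun_eq_iff)
  have int_h: "integrable lborel h"
    unfolding h_def phi using L
    by (subst mult.commute, intro integrable_std_normal_density_mult) (auto simp: Phi_window_nonneg Phi_window_le_1)
  define f1 where "f1 u = std_normal_density u * (indicator {- c - a..c - a} u * A)" for u
  define f2 where "f2 u = indicator {..- c - a} u *\<^sub>R h u" for u
  define f3 where "f3 u = indicator {c - a..} u *\<^sub>R h u" for u
  have int1: "integrable lborel f1"
    unfolding f1_def using L by (intro integrable_std_normal_density_mult)
      (auto simp: A_def Phi_window_nonneg Phi_window_le_1 split: split_indicator)
  have int2: "integrable lborel f2" and int3: "integrable lborel f3"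
    unfolding f2_def f3_def by (intro integrable_mult_indicator int_h; simp)+
  have "std_normal_density u * cond_cover t L u = f1 u + f2 u + f3 u" if "u \<noteq> - c - a" "u \<noteq> c - a" for u
    using that crit_half_alpha_pos
    by (auto simp: cond_cover_def f1_def f2_def f3_def h_def phi a_def d_def A_def indicator_def abs_le_iff)
  then have "G_PT s0 s1 alpha tau t L = (\<integral>u. f1 u + f2 u + f3 u \<partial>lborel)"
    unfolding G_PT_eq_integral[OF L]
    using borel_measurable_integrable[OF Bochner_Integration.integrable_add[OF Bochner_Integration.integrable_add[OF int1 int2] int3]]
    by (intro integral_cong_AE)
      (auto intro: eventually_mono[OF eventually_conj[OF AE_lborel_singleton[of "- c - a"] AE_lborel_singleton[of "c - a"]]])
  also have "\<dots> = integral\<^sup>L lborel f1 + integral\<^sup>L lborel f2 + integral\<^sup>L lborel f3"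
    using int1 int2 int3 by simp
  also have "integral\<^sup>L lborel f1 = measure std_normal_distribution {- c - a..c - a} * A"
    by (simp add: f1_def[abs_def] measure_std_normal_distribution mult_ac)
  also have "\<dots> = (Phi (c - a) - Phi (- c - a)) * A"
    using crit_half_alpha_pos by (simp add: measure_std_normal_Icc)
  finally show ?thesis
    by (simp add: f2_def f3_def h_def A_def Phi_window_def set_lebesgue_integral_def)
qed

lemma G_PT_continuous:
  assumes L: "0 \<le> L"
  shows "continuous_on UNIV (\<lambda>t. G_PT s0 s1 alpha tau t L)"
proof -
  define h where "h = (\<lambda>u. (Phi (L + sqrt g * u) - Phi (- L + sqrt g * u)) * phi u)"
  have window: "h u = std_normal_density u * Phi_window (sqrt g * u) L" for u
    by (simp add: h_def phi_def Phi_window_def)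
  have "integrable lborel h"
    unfolding window[abs_def] using L
    by (intro integrable_std_normal_density_mult) (auto simp: Phi_window_nonneg Phi_window_le_1)
  moreover have "\<bar>h u\<bar> \<le> 1" for u
    using L std_normal_density_le_1[of u] Phi_window_nonneg[of L] Phi_window_le_1
    by (auto simp: window abs_mult intro!: mult_le_one)
  ultimately have "1-lipschitz_on UNIV (\<lambda>x. LBINT u:{..x}. h u)" "1-lipschitz_on UNIV (\<lambda>x. LBINT u:{x..}. h u)"
    by (simp_all add: lipschitz_on_set_integral_atMost lipschitz_on_set_integral_atLeast)
  then have lower: "continuous_on UNIV (\<lambda>t. LBINT u:{..e t}. h u)"
    and upper: "continuous_on UNIV (\<lambda>t. LBINT u:{e t..}. h u)"
    if "continuous_on UNIV e" for e :: "real \<Rightarrow> real"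
    using continuous_on_compose2[OF lipschitz_on_continuous_on that] by auto
  show ?thesis
    unfolding G_PT_formula[OF L] h_def[symmetric]
    by (intro continuous_intros lower upper)
qed

lemma G_PT_lipschitz:
  assumes L: "0 \<le> L" and L': "0 \<le> L'"
  shows "\<bar>G_PT s0 s1 alpha tau t L - G_PT s0 s1 alpha tau t L'\<bar> \<le> 2 * \<bar>L - L'\<bar>"
proof -
  define f where "f u = std_normal_density u * (cond_cover t L u - cond_cover t L' u)" for u
  have f: "f = (\<lambda>u. std_normal_density u * cond_cover t L u - std_normal_density u * cond_cover t L' u)"
    by (simp add: f_def fun_eq_iff right_diff_distrib)
  have int: "integrable lborel f"
    unfolding f by (intro Bochner_Integration.integrable_diff integrable_cond_cover L L')
  have "G_PT s0 s1 alpha tau t L - G_PT s0 s1 alpha tau t L' = integral\<^sup>L lborel f"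
    unfolding f G_PT_eq_integral[OF L] G_PT_eq_integral[OF L']
    by (intro Bochner_Integration.integral_diff[symmetric] integrable_cond_cover L L')
  also have "\<bar>\<dots>\<bar> \<le> (\<integral>u. std_normal_density u * (2 * \<bar>L - L'\<bar>) \<partial>lborel)"
  proof (rule integral_abs_bound_integral[OF int])
    show "\<bar>f u\<bar> \<le> std_normal_density u * (2 * \<bar>L - L'\<bar>)" for u
    proof -
      have "\<bar>cond_cover t L u - cond_cover t L' u\<bar> \<le> 2 * \<bar>L - L'\<bar>"
        by (simp add: cond_cover_def Phi_window_lipschitz)
      from mult_left_mono[OF this normal_density_nonneg[of 0 1 u]] show ?thesis
        by (simp add: f_def abs_mult)
    qed
  qed simp
  also have "\<dots> = 2 * \<bar>L - L'\<bar>"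
    by simp
  finally show ?thesis .
qed

lemma G_PT_strict_mono:
  assumes L: "0 \<le> L" and LL': "L < L'"
  shows "G_PT s0 s1 alpha tau t L < G_PT s0 s1 alpha tau t L'"
proof -
  define a where "a = sqrt (g / (1 + g)) * t"
  define J where "J = {- c - a..c - a}"
  define \<delta> where "\<delta> = Phi_window (- (g / sqrt (1 + g) * t)) L' - Phi_window (- (g / sqrt (1 + g) * t)) L"
  have L': "0 \<le> L'" using L LL' by simp
  have "0 < \<delta> * measure std_normal_distribution J"
    using crit_half_alpha_pos Phi_strict_mono[of "- c - a" "c - a"] Phi_window_strict_mono[OF LL']
    by (simp add: J_def \<delta>_def measure_std_normal_Icc)
  also have "\<delta> * measure std_normal_distribution J = (\<integral>u. \<delta> * (indicator J u * std_normal_density u) \<partial>lborel)"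
    by (simp add: J_def measure_std_normal_distribution)
  also have "\<dots> \<le> (\<integral>u. std_normal_density u * (cond_cover t L' u - cond_cover t L u) \<partial>lborel)"
  proof (rule integral_mono)
    have "integrable lborel (\<lambda>u. indicator J u *\<^sub>R std_normal_density u)"
      unfolding J_def by (intro integrable_mult_indicator) simp_all
    then show "integrable lborel (\<lambda>u. \<delta> * (indicator J u * std_normal_density u))"
      by simp
    show "integrable lborel (\<lambda>u. std_normal_density u * (cond_cover t L' u - cond_cover t L u))"
      using integrable_cond_cover[OF L] integrable_cond_cover[OF L'] by (simp add: right_diff_distrib)
    show "\<delta> * (indicator J u * std_normal_density u) \<le> std_normal_density u * (cond_cover t L' u - cond_cover t L u)" for u
    proof -
      have "indicator J u * \<delta> \<le> cond_cover t L' u - cond_cover t L u"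
        using Phi_window_strict_mono[OF LL', of "sqrt g * u"]
        by (simp add: cond_cover_def J_def \<delta>_def a_def abs_le_iff indicator_def)
      from mult_left_mono[OF this normal_density_nonneg[of 0 1 u]] show ?thesis
        by (simp add: mult_ac)
    qed
  qed
  also have "\<dots> = G_PT s0 s1 alpha tau t L' - G_PT s0 s1 alpha tau t L"
    using integrable_cond_cover[OF L] integrable_cond_cover[OF L']
    by (simp add: G_PT_eq_integral L L' right_diff_distrib)
  finally show ?thesis
    by simp
qed

lemma G_PT_zero: "G_PT s0 s1 alpha tau t 0 = 0"
proof -
  have "cond_cover t 0 u = 0" for u
    by (simp add: cond_cover_def)
  then show ?thesis
    by (simp add: G_PT_eq_integral)
qed

lemma G_PT_tendsto_1: "(\<lambda>n. G_PT s0 s1 alpha tau t (real n)) \<longlonglongrightarrow> 1"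
proof -
  have "(\<lambda>n. \<integral>u. std_normal_density u * cond_cover t (real n) u \<partial>lborel)
      \<longlonglongrightarrow> (\<integral>u. std_normal_density u * 1 \<partial>lborel)"
  proof (rule integral_dominated_convergence[where w = std_normal_density])
    have "(\<lambda>n. Phi_window x (real n)) \<longlonglongrightarrow> 1" for x
      by (rule filterlim_compose[OF Phi_window_tendsto_1 filterlim_real_sequentially])
    then have "(\<lambda>n. cond_cover t (real n) u) \<longlonglongrightarrow> 1" for u
      by (cases "\<bar>u + sqrt (g / (1 + g)) * t\<bar> \<le> c") (simp_all add: cond_cover_def)
    then show "AE u in lborel. (\<lambda>n. std_normal_density u * cond_cover t (real n) u)
        \<longlonglongrightarrow> std_normal_density u * 1"
      by (intro AE_I2 tendsto_mult tendsto_const)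
    show "AE u in lborel. norm (std_normal_density u * cond_cover t (real n) u) \<le> std_normal_density u" for n
      by (intro AE_I2) (auto simp: abs_mult cond_cover_nonneg cond_cover_le_1 intro!: mult_left_le)
  qed simp_all
  then show ?thesis
    by (simp add: G_PT_eq_integral)
qed

end

sublocale pretest \<subseteq> coverage_family "G_PT s0 s1 alpha tau" 2
  by unfold_locales (fact G_PT_continuous G_PT_lipschitz G_PT_strict_mono G_PT_zero G_PT_tendsto_1 G_PT_uminus)+

context pretest
begin

lemma L_hat_eq_Inf_worst_cover:
  "L_hat s0 s1 alpha tau b zeta = Inf {L. 0 \<le> L \<and> 1 - zeta \<le> worst_cover b L}"
proof -
  have "{Delta. \<bar>Delta / s0\<bar> \<le> b} = (\<lambda>t. t * s0) ` {t. \<bar>t\<bar> \<le> b}"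
    using s0_pos by (auto simp: image_iff abs_mult intro!: exI[of _ "x / s0" for x])
  then have "(INF Delta\<in>{Delta. \<bar>Delta / s0\<bar> \<le> b}. cover_prob s0 s1 alpha tau Delta L) = worst_cover b L" for L
    by (simp add: worst_cover_def image_image G_PT_def)
  then show ?thesis
    by (simp add: L_hat_def)
qed

lemma L_hat_characterization:
  assumes b: "0 \<le> b" and z: "0 < zeta" "zeta < 1"
  defines "Lh \<equiv> L_hat s0 s1 alpha tau b zeta"
  shows "Lh \<ge> 0
    \<and> (\<exists>t\<in>{0..b}. G_PT s0 s1 alpha tau t Lh = 1 - zeta)
    \<and> (\<forall>t\<in>{0..b}. G_PT s0 s1 alpha tau t Lh \<ge> 1 - zeta)
    \<and> (\<forall>L. L \<ge> 0 \<longrightarrow> (\<exists>t\<in>{0..b}. G_PT s0 s1 alpha tau t L = 1 - zeta) \<longrightarrow>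
          (\<forall>t\<in>{0..b}. G_PT s0 s1 alpha tau t L \<ge> 1 - zeta) \<longrightarrow> L = Lh)
    \<and> (\<forall>Delta. \<bar>Delta / s0\<bar> \<le> b \<longrightarrow> cover_prob s0 s1 alpha tau Delta Lh \<ge> 1 - zeta)
    \<and> (\<forall>L. 0 \<le> L \<longrightarrow> L < Lh \<longrightarrow>
          (\<exists>Delta. \<bar>Delta / s0\<bar> \<le> b \<and> cover_prob s0 s1 alpha tau Delta L < 1 - zeta))"
proof -
  note level = Inf_worst_cover_level[OF b z, folded L_hat_eq_Inf_worst_cover, folded Lh_def]
  obtain t0 where t0: "t0 \<in> {0..b}" "worst_cover b Lh = G_PT s0 s1 alpha tau t0 Lh"
    using worst_cover_attained[OF b level(1)] by blast
  have on_level: "L = Lh" if "0 \<le> L" "t \<in> {0..b}" "G_PT s0 s1 alpha tau t L = 1 - zeta"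
    "\<forall>t\<in>{0..b}. G_PT s0 s1 alpha tau t L \<ge> 1 - zeta" for L t
  proof -
    obtain t1 where "t1 \<in> {0..b}" "worst_cover b L = G_PT s0 s1 alpha tau t1 L"
      using worst_cover_attained[OF b \<open>0 \<le> L\<close>] by blast
    then have "worst_cover b L = 1 - zeta"
      using that worst_cover_le[OF b \<open>0 \<le> L\<close>, of t] by force
    then show ?thesis
      using level(3) that(1) by blast
  qed
  have below: "\<exists>Delta. \<bar>Delta / s0\<bar> \<le> b \<and> cover_prob s0 s1 alpha tau Delta L < 1 - zeta"
    if "0 \<le> L" "L < Lh" for L
  proof -
    obtain t1 where "t1 \<in> {0..b}" "worst_cover b L = G_PT s0 s1 alpha tau t1 L"
      using worst_cover_attained[OF b \<open>0 \<le> L\<close>] by blast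
    then show ?thesis
      using level(4)[OF that] s0_pos by (intro exI[of _ "t1 * s0"]) (simp add: cover_prob_eq_G_PT)
  qed
  show ?thesis
  proof (intro conjI allI impI ballI)
    show "0 \<le> Lh"
      by (fact level(1))
    show "\<exists>t\<in>{0..b}. G_PT s0 s1 alpha tau t Lh = 1 - zeta"
      using t0 level(2) by auto
    show "1 - zeta \<le> G_PT s0 s1 alpha tau t Lh" if "t \<in> {0..b}" for t
      using worst_cover_le[OF b level(1), of t] level(2) that by simp
    show "1 - zeta \<le> cover_prob s0 s1 alpha tau Delta Lh" if "\<bar>Delta / s0\<bar> \<le> b" for Delta
      using worst_cover_le[OF b level(1) that] level(2) by (simp add: cover_prob_eq_G_PT)
  qed (use on_level below in blast)+
qed

end

theorem theorem2:
  fixes s0 s1 alpha tau :: real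
  assumes "s0 > 0" and "s1 > 0" and "0 < alpha" and "alpha < 1"
  shows
    "(\<forall>L Delta. L > 0 \<longrightarrow>
        cover_prob s0 s1 alpha tau Delta L = cover_prob s0 s1 alpha tau (- Delta) L)
   \<and> (\<forall>t L. L \<ge> 0 \<longrightarrow>
        (let c = crit (alpha / 2); g = gam s0 s1;
             a = sqrt (g / (1 + g)) * t; d = g / sqrt (1 + g) * t in
         G_PT s0 s1 alpha tau t L =
           (Phi (c - a) - Phi (- c - a)) * (Phi (L - d) - Phi (- L - d))
           + (LBINT u:{..- c - a}. (Phi (L + sqrt g * u) - Phi (- L + sqrt g * u)) * phi u)
           + (LBINT u:{c - a..}. (Phi (L + sqrt g * u) - Phi (- L + sqrt g * u)) * phi u)))
   \<and> (\<forall>b zeta. b \<ge> 0 \<longrightarrow> 0 < zeta \<longrightarrow> zeta < 1 \<longrightarrow>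
        (let Lh = L_hat s0 s1 alpha tau b zeta in
          Lh \<ge> 0
          \<and> (\<exists>t\<in>{0..b}. G_PT s0 s1 alpha tau t Lh = 1 - zeta)
          \<and> (\<forall>t\<in>{0..b}. G_PT s0 s1 alpha tau t Lh \<ge> 1 - zeta)
          \<and> (\<forall>L. L \<ge> 0 \<longrightarrow>
                (\<exists>t\<in>{0..b}. G_PT s0 s1 alpha tau t L = 1 - zeta) \<longrightarrow>
                (\<forall>t\<in>{0..b}. G_PT s0 s1 alpha tau t L \<ge> 1 - zeta) \<longrightarrow> L = Lh)
          \<and> (\<forall>Delta. \<bar>Delta / s0\<bar> \<le> b \<longrightarrow> cover_prob s0 s1 alpha tau Delta Lh \<ge> 1 - zeta)
          \<and> (\<forall>L. 0 \<le> L \<longrightarrow> L < Lh \<longrightarrow>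
                (\<exists>Delta. \<bar>Delta / s0\<bar> \<le> b \<and> cover_prob s0 s1 alpha tau Delta L < 1 - zeta))))"
proof -
  interpret pretest s0 s1 alpha tau
    using assms by unfold_locales
  show ?thesis
    unfolding Let_def
  proof (intro conjI allI impI)
    show "cover_prob s0 s1 alpha tau Delta L = cover_prob s0 s1 alpha tau (- Delta) L" if "L > 0" for L Delta
      using cover_prob_uminus[of L Delta] that by simp
  qed (use G_PT_formula L_hat_characterization in blast)+
qed

end
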